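(* Let $q$ be a prime power and let $l$ be an odd prime coprime to $q$. Then either every monic irreducible factor of $x^{l}-1$ in $\mathbb{F}_{q^2}[x]$ is SCRIM, or $x-1$ is the only SCRIM factor of $x^{l}-1$ in $\mathbb{F}_{q^2}[x]$.
   Context: $\mathbb{F}_{q^2}$ is the finite field with $q^2$ elements. For $\alpha\in\mathbb{F}_{q^2}$ put $\bar\alpha=\alpha^q$, and for $f(x)=\sum_i f_ix^i$ put $\overline{f(x)}=\sum_i \bar f_i x^i$. For $f(x)$ with $f(0)\neq 0$, $f^*(x)=x^{\deg f}f(0)^{-1}f(1/x)$ and $f^\dagger(x)=\overline{f^*(x)}$. A polynomial is SCRIM if it is monic, irreducible over $\mathbb{F}_{q^2}$, has nonzero constant term, and satisfies $f=f^\dagger$. A SCRIM factor of $x^n-1$ is a SCRIM polynomial dividing $x^n-1$ in $\mathbb{F}_{q^2}[x]$. *)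

theory Defs
  imports "HOL-Computational_Algebra.Computational_Algebra"
begin

text \<open>The ambient field is a finite field of type 'a with CARD('a) = q^2.
  Conjugation: bar a = a^q.\<close>

definition conj_q :: "nat \<Rightarrow> 'a::field \<Rightarrow> 'a" where
  "conj_q q a = a ^ q"

definition poly_conj :: "nat \<Rightarrow> 'a::field poly \<Rightarrow> 'a poly" where
  "poly_conj q f = map_poly (conj_q q) f"

text \<open>f^*(x) = x^(deg f) f(0)^(-1) f(1/x); reflect_poly f = x^(deg f) f(1/x).\<close>
definition recip_star :: "'a::field poly \<Rightarrow> 'a poly" where
  "recip_star f = smult (inverse (coeff f 0)) (reflect_poly f)"

definition dagger :: "nat \<Rightarrow> 'a::field poly \<Rightarrow> 'a poly" where
  "dagger q f = poly_conj q (recip_star f)"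

definition SCRIM :: "nat \<Rightarrow> 'a::field poly \<Rightarrow> bool" where
  "SCRIM q f \<longleftrightarrow> lead_coeff f = 1 \<and> irreducible f \<and> coeff f 0 \<noteq> 0 \<and> f = dagger q f"

end

theory Submission
  imports Defs "HOL-Algebra.Algebraic_Closure_Type" "HOL-Number_Theory.Residues"
begin

(* Let z be a root of a monic irreducible factor f of x^l - 1 in the algebraic closure, and
   Q = q^2.  The roots of f form the Frobenius orbit of z (z, z^Q, z^(Q^2), ...), and the roots
   of the dagger of f are the elements w with w^(-q) a root of f.  Hence f is SCRIM iff z^(-q) lies
   in the orbit of z, i.e. iff z^(Q^j + q) = 1 for some j.  If l divides some Q^j + q, this holds
   for every l-th root of unity, so every factor is SCRIM.  Otherwise it holds only for z = 1,
   because any other l-th root of unity has multiplicative order exactly l. *)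

hide_const (open) module.smult Polynomials.degree Polynomials.lead_coeff Divisibility.prime
  Divisibility.irreducible up_ring.monom up_ring.coeff

lemma map_poly_add_hom:
  assumes "h 0 = 0" "\<And>x y. h (x + y) = h x + h y"
  shows "map_poly h (p + q) = map_poly h p + map_poly h q"
  by (intro poly_eqI) (simp add: coeff_map_poly assms)

lemma map_poly_mult_hom:
  fixes h :: "'a::comm_ring_1 \<Rightarrow> 'b::comm_ring_1"
  assumes h0: "h 0 = 0" and add: "\<And>x y. h (x + y) = h x + h y"
    and mult: "\<And>x y. h (x * y) = h x * h y"
  shows "map_poly h (p * q) = map_poly h p * map_poly h q"
proof (induction p rule: pCons_induct)
  case (pCons a p)
  have "map_poly h (pCons a p * q) = map_poly h (smult a q + pCons 0 (p * q))"
    by simp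
  also have "\<dots> = map_poly h (pCons a p) * map_poly h q"
    using pCons.IH
    by (simp add: h0 map_poly_add_hom[OF h0 add] map_poly_smult[of h, OF h0 mult]
        map_poly_pCons[of h, OF h0])
  finally show ?case .
qed simp

lemma map_poly_prod_hom:
  fixes h :: "'a::comm_ring_1 \<Rightarrow> 'b::comm_ring_1"
  assumes h0: "h 0 = 0" and h1: "h 1 = 1" and add: "\<And>x y. h (x + y) = h x + h y"
    and mult: "\<And>x y. h (x * y) = h x * h y"
  shows "map_poly h (\<Prod>i\<in>A. P i) = (\<Prod>i\<in>A. map_poly h (P i))"
  by (induction A rule: infinite_finite_induct) (simp_all add: h1 map_poly_mult_hom[OF h0 add mult])

lemma map_poly_to_ac_mult [simp]: "map_poly to_ac (p * q) = map_poly to_ac p * map_poly to_ac q"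
  by (rule map_poly_mult_hom) simp_all

lemma map_poly_to_ac_diff [simp]: "map_poly to_ac (p - q) = map_poly to_ac p - map_poly to_ac q"
  by (intro poly_eqI) (simp add: coeff_map_poly)

lemma map_poly_to_ac_eq_0_iff [simp]: "map_poly to_ac p = 0 \<longleftrightarrow> p = 0"
  by (rule map_poly_eq_0_iff) simp_all

lemma degree_map_poly_to_ac [simp]: "degree (map_poly to_ac p) = degree p"
  by (rule degree_map_poly) simp

lemma map_poly_to_ac_reflect_poly: "map_poly to_ac (reflect_poly p) = reflect_poly (map_poly to_ac p)"
  by (intro poly_eqI) (simp add: coeff_map_poly coeff_reflect_poly)

lemma frobenius_diff:
  fixes x y :: "'b::comm_ring_1"
  assumes "prime CHAR('b)" "m = CHAR('b) ^ n"
  shows "(x - y) ^ m = x ^ m - y ^ m"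
proof -
  have "x ^ m = (x - y + y) ^ m"
    by simp
  also have "\<dots> = (x - y) ^ m + y ^ m"
    by (rule freshmans_dream'[OF assms])
  finally show ?thesis
    by simp
qed

lemma inj_frobenius:
  assumes "prime CHAR('b::idom)" "m = CHAR('b) ^ n"
  shows "inj (\<lambda>x::'b. x ^ m)"
proof (rule injI)
  fix x y :: 'b
  assume "x ^ m = y ^ m"
  then have "(x - y) ^ m = 0"
    by (simp add: frobenius_diff[OF assms])
  then show "x = y"
    by simp
qed

lemma prime_CHAR_finite_field: "prime CHAR('a::{finite,field})"
  by (rule prime_CHAR_semidom) (simp add: finite_imp_CHAR_pos)

lemma CHAR_eq_if_card_eq_prime_power:
  assumes "card (UNIV :: 'a::{finite,field} set) = p ^ n" "prime p" "n > 0"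
  shows "CHAR('a) = p"
proof -
  have "CHAR('a) dvd p ^ n"
    using CHAR_dvd_CARD[where 'a = 'a] assms(1) by simp
  then have "CHAR('a) dvd p"
    using prime_CHAR_finite_field[where 'a = 'a] prime_dvd_power by blast
  then show ?thesis
    using prime_CHAR_finite_field[where 'a = 'a] assms(2) by (simp add: primes_dvd_imp_eq)
qed

lemma finite_field_power_card_eq_self:
  fixes x :: "'a::{finite,field}"
  shows "x ^ card (UNIV :: 'a set) = x"
proof (cases "x = 0")
  case False
  define R where "R = (ring_of_type_algebra :: 'a ring)"
  interpret R: field R
    unfolding R_def ..
  have units: "Units R = UNIV - {0}"
    using R.field_Units by (simp add: R_def ring_of_type_algebra_def)
  have one: "\<one>\<^bsub>R\<^esub> = 1"
    by (simp add: R_def ring_of_type_algebra_def)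
  have pow: "x [^]\<^bsub>R\<^esub> n = x ^ n" for n
    by (induction n) (simp_all add: R_def ring_of_type_algebra_def mult.commute)
  have "x ^ (card (UNIV :: 'a set) - 1) = 1"
    using R.units_power_order_eq_one[of x] False by (simp add: units one pow card_Diff_singleton)
  then show ?thesis
    by (metis finite_UNIV_card_ge_0 finite power_minus_mult mult_1_left)
qed (simp add: finite_UNIV_card_ge_0)

lemma finite_field_power_card_power_eq_self:
  fixes x :: "'a::{finite,field}"
  shows "x ^ (card (UNIV :: 'a set) ^ j) = x"
  by (induction j) (simp_all add: power_mult finite_field_power_card_eq_self)

text \<open>The elements of the base field already are \<open>Q = |'a|\<close> roots of \<open>X\<^sup>Q - X\<close>, so there is
  no room for further roots.\<close>
lemma power_card_eq_self_imp_in_range_to_ac: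
  fixes c :: "'a::{finite,field} alg_closure"
  assumes "c ^ card (UNIV :: 'a set) = c"
  shows "c \<in> range to_ac"
proof (rule ccontr)
  assume c: "c \<notin> range to_ac"
  define N where "N = card (UNIV :: 'a set)"
  have "card {0, 1 :: 'a} \<le> N"
    unfolding N_def by (rule card_mono) simp_all
  then have N: "N \<ge> 2"
    by simp
  define P where "P = monom (1 :: 'a alg_closure) N - [:0, 1:]"
  have "coeff P N = 1"
    using N by (simp add: P_def coeff_pCons split: nat.splits)
  then have P0: "P \<noteq> 0"
    by auto
  have "degree P \<le> N"
    unfolding P_def by (rule degree_diff_le) (use N in \<open>auto simp: degree_monom_le\<close>)
  have "insert c (range to_ac) \<subseteq> {x. poly P x = 0}"
    using assms arg_cong[OF finite_field_power_card_eq_self, of to_ac]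
    by (auto simp: P_def N_def poly_monom)
  then have "card (insert c (range (to_ac :: 'a \<Rightarrow> _))) \<le> card {x. poly P x = 0}"
    by (rule card_mono[OF poly_roots_finite[OF P0]])
  also have "\<dots> \<le> degree P"
    by (rule card_poly_roots_bound[OF P0])
  also have "card (insert c (range (to_ac :: 'a \<Rightarrow> _))) = N + 1"
    using c by (simp add: card_image inj_to_ac N_def)
  finally show False
    using \<open>degree P \<le> N\<close> by simp
qed

lemma poly_map_poly_to_ac_frobenius:
  fixes g :: "'a::field poly" and z :: "'a alg_closure"
  assumes "prime CHAR('a)" "m = CHAR('a) ^ n"
  shows "poly (map_poly to_ac g) z ^ m = poly (map_poly to_ac (map_poly (\<lambda>a. a ^ m) g)) (z ^ m)"
proof -
  have "m > 0"
    using assms prime_gt_0_nat by simp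
  moreover have "(x + y) ^ m = x ^ m + y ^ m" for x y :: "'a alg_closure"
    by (rule freshmans_dream') (use assms in simp_all)
  ultimately show ?thesis
    by (induction g rule: pCons_induct) (simp_all add: map_poly_pCons power_mult_distrib)
qed

lemma poly_map_poly_to_ac_power_card_power:
  fixes g :: "'a::{finite,field} poly"
  assumes "card (UNIV :: 'a set) = CHAR('a) ^ n"
  shows "poly (map_poly to_ac g) (z ^ (card (UNIV :: 'a set) ^ j))
    = poly (map_poly to_ac g) z ^ (card (UNIV :: 'a set) ^ j)"
proof -
  have "card (UNIV :: 'a set) ^ j = CHAR('a) ^ (n * j)"
    by (simp add: assms power_mult)
  from poly_map_poly_to_ac_frobenius[OF prime_CHAR_finite_field this, of g z] show ?thesis
    by (simp add: finite_field_power_card_power_eq_self)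
qed

lemma irreducible_dvd_of_common_root:
  fixes f g :: "'a::field poly"
  assumes f: "irreducible f" "poly (map_poly to_ac f) z = 0" and g: "poly (map_poly to_ac g) z = 0"
  shows "f dvd g"
proof -
  define P where "P h \<longleftrightarrow> h \<noteq> 0 \<and> poly (map_poly to_ac h) z = 0" for h :: "'a poly"
  have "P f"
    using f by (auto simp: P_def)
  then obtain m where "P m" and min: "\<And>h. P h \<Longrightarrow> degree m \<le> degree h"
    using ex_has_least_nat[of P f degree] by blast
  have m_dvd: "m dvd h" if "poly (map_poly to_ac h) z = 0" for h
  proof (rule ccontr)
    assume "\<not> m dvd h"
    then have "h mod m \<noteq> 0"
      by (simp add: dvd_eq_mod_eq_0)
    moreover have "poly (map_poly to_ac (h mod m)) z = 0"
      using that \<open>P m\<close> by (simp add: P_def minus_div_mult_eq_mod[symmetric])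
    ultimately have "degree m \<le> degree (h mod m)"
      by (simp add: P_def min)
    moreover have "degree (h mod m) < degree m"
      using \<open>P m\<close> \<open>h mod m \<noteq> 0\<close> by (simp add: P_def degree_mod_less')
    ultimately show False
      by simp
  qed
  have "\<not> is_unit m"
  proof
    assume "is_unit m"
    then obtain u where "1 = m * u"
      by blast
    then have "poly (map_poly to_ac (m * u)) z = 1"
      by (metis map_poly_1' poly_1 to_ac_1)
    with \<open>P m\<close> show False
      by (simp add: P_def)
  qed
  then have "f dvd m"
    using irreducibleD'[OF f(1) m_dvd[OF f(2)]] by blast
  then show ?thesis
    using m_dvd[OF g] by (rule dvd_trans)
qed

lemma monic_dvd_imp_eq:
  fixes f g :: "'a::field poly"
  assumes "lead_coeff f = 1" "lead_coeff g = 1" "f dvd g" "degree g \<le> degree f"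
  shows "f = g"
proof -
  obtain h where h: "g = f * h"
    using assms(3) by blast
  have "f \<noteq> 0" "h \<noteq> 0"
    using h assms(2) by auto
  then have "degree h = 0"
    using h assms(4) by (simp add: degree_mult_eq)
  moreover have "lead_coeff h = 1"
    using h assms(1,2) by (simp add: lead_coeff_mult)
  ultimately have "h = 1"
    by (metis degree_0_id one_pCons)
  then show ?thesis
    using h by simp
qed

lemma irreducible_imp_degree_pos:
  fixes f :: "'a::field poly"
  assumes "irreducible f"
  shows "degree f > 0"
proof -
  have "f \<noteq> 0"
    using assms by auto
  then show ?thesis
    using irreducible_not_unit[OF assms] is_unit_iff_degree by blast
qed

lemma irreducible_has_root_in_alg_closure:
  fixes f :: "'a::field poly"
  assumes "irreducible f"
  obtains z where "poly (map_poly to_ac f) z = 0"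
  using alg_closed_imp_poly_has_root[of "map_poly to_ac f"] irreducible_imp_degree_pos[OF assms] that
  by auto

text \<open>The Frobenius map \<open>x \<mapsto> x\<^sup>Q\<close> permutes the linear factors, hence fixes the coefficients.\<close>
lemma frobenius_stable_prod_descends:
  fixes S :: "'a::{finite,field} alg_closure set"
  assumes Q: "card (UNIV :: 'a set) = CHAR('a) ^ n"
    and S: "finite S" "(\<lambda>x. x ^ card (UNIV :: 'a set)) ` S = S"
  obtains g :: "'a poly" where "map_poly to_ac g = (\<Prod>s\<in>S. [:-s, 1:])"
proof -
  define \<phi> where "\<phi> = (\<lambda>x :: 'a alg_closure. x ^ card (UNIV :: 'a set))"
  define G where "G = (\<Prod>s\<in>S. [:-s, 1:])"
  have CHAR: "prime CHAR('a alg_closure)" "card (UNIV :: 'a set) = CHAR('a alg_closure) ^ n"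
    using prime_CHAR_finite_field[where 'a = 'a] Q by simp_all
  have \<phi>_0: "\<phi> 0 = 0" and \<phi>_1: "\<phi> 1 = 1"
    by (simp_all add: \<phi>_def finite_UNIV_card_ge_0)
  have \<phi>_add: "\<phi> (x + y) = \<phi> x + \<phi> y" for x y
    unfolding \<phi>_def by (rule freshmans_dream'[OF CHAR])
  have \<phi>_minus: "\<phi> (- x) = - \<phi> x" for x
    using frobenius_diff[OF CHAR, of 0 x] \<phi>_0 by (simp add: \<phi>_def)
  have \<phi>_mult: "\<phi> (x * y) = \<phi> x * \<phi> y" for x y
    by (simp add: \<phi>_def power_mult_distrib)
  have "inj_on \<phi> S"
    using inj_frobenius[OF CHAR] by (simp add: \<phi>_def inj_on_subset[OF _ subset_UNIV])
  have "map_poly \<phi> G = (\<Prod>s\<in>S. [:-\<phi> s, 1:])"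
    by (simp add: G_def map_poly_prod_hom[OF \<phi>_0 \<phi>_1 \<phi>_add \<phi>_mult] map_poly_pCons \<phi>_0 \<phi>_1 \<phi>_minus)
  also have "\<dots> = (\<Prod>s\<in>\<phi> ` S. [:-s, 1:])"
    using prod.reindex[OF \<open>inj_on \<phi> S\<close>, of "\<lambda>s. [:-s, 1:]"] by simp
  also have "\<phi> ` S = S"
    using S(2) by (simp add: \<phi>_def)
  finally have "map_poly \<phi> G = G"
    by (simp add: G_def)
  then have "coeff G i ^ card (UNIV :: 'a set) = coeff G i" for i
    using \<phi>_0 by (metis coeff_map_poly \<phi>_def)
  then have "coeff G i \<in> range to_ac" for i
    by (rule power_card_eq_self_imp_in_range_to_ac)
  then have "map_poly to_ac (map_poly of_ac G) = G"
    by (intro poly_eqI) (simp add: coeff_map_poly to_ac_of_ac)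
  then show ?thesis
    using that by (simp add: G_def)
qed

lemma irreducible_degree_le_card_frobenius_orbit:
  fixes f :: "'a::{finite,field} poly"
  assumes Q: "card (UNIV :: 'a set) = CHAR('a) ^ n"
    and f: "irreducible f" "poly (map_poly to_ac f) z = 0"
  defines "S \<equiv> range (\<lambda>j. z ^ (card (UNIV :: 'a set) ^ j))"
  shows "finite S" "degree f \<le> card S"
proof -
  have CHAR: "prime CHAR('a alg_closure)" "card (UNIV :: 'a set) = CHAR('a alg_closure) ^ n"
    using prime_CHAR_finite_field[where 'a = 'a] Q by simp_all
  have "S \<subseteq> {x. poly (map_poly to_ac f) x = 0}"
    using f(2) by (auto simp: S_def poly_map_poly_to_ac_power_card_power[OF Q] finite_UNIV_card_ge_0)
  moreover have "map_poly to_ac f \<noteq> 0"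
    using f(1) by auto
  ultimately show "finite S"
    using poly_roots_finite finite_subset by blast
  moreover have "(\<lambda>x. x ^ card (UNIV :: 'a set)) ` S \<subseteq> S"
  proof (clarsimp simp: S_def)
    fix j
    have "(z ^ (card (UNIV :: 'a set) ^ j)) ^ card (UNIV :: 'a set) = z ^ (card (UNIV :: 'a set) ^ Suc j)"
      by (simp only: power_Suc2 power_mult)
    then show "(z ^ (card (UNIV :: 'a set) ^ j)) ^ card (UNIV :: 'a set) \<in> range (\<lambda>j. z ^ (card (UNIV :: 'a set) ^ j))"
      by (rule range_eqI)
  qed
  moreover have "inj_on (\<lambda>x. x ^ card (UNIV :: 'a set)) S"
    using inj_frobenius[OF CHAR] inj_on_subset by blast
  ultimately have "(\<lambda>x. x ^ card (UNIV :: 'a set)) ` S = S"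
    by (rule endo_inj_surj)
  then obtain g where g: "map_poly to_ac g = (\<Prod>s\<in>S. [:-s, 1:])"
    using frobenius_stable_prod_descends[OF Q \<open>finite S\<close>] by blast
  have "z \<in> S"
    unfolding S_def by (rule range_eqI[of _ _ 0]) simp
  then have "poly (map_poly to_ac g) z = 0"
    using \<open>finite S\<close> by (simp add: g poly_prod prod_zero_iff)
  then have "f dvd g"
    using irreducible_dvd_of_common_root f by blast
  moreover have "map_poly to_ac g \<noteq> 0"
    using \<open>finite S\<close> by (simp add: g prod_zero_iff)
  ultimately have "degree f \<le> degree (map_poly to_ac g)"
    by (simp add: dvd_imp_degree_le)
  also have "\<dots> = card S"
    by (simp add: g degree_prod_eq_sum_degree)
  finally show "degree f \<le> card S" .
qed

lemma irreducible_roots_in_frobenius_orbit: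
  fixes f :: "'a::{finite,field} poly"
  assumes Q: "card (UNIV :: 'a set) = CHAR('a) ^ n"
    and f: "irreducible f" "poly (map_poly to_ac f) z = 0" and w: "poly (map_poly to_ac f) w = 0"
  shows "\<exists>j. w = z ^ (card (UNIV :: 'a set) ^ j)"
proof (rule ccontr)
  assume w_notin: "\<nexists>j. w = z ^ (card (UNIV :: 'a set) ^ j)"
  define S where "S = range (\<lambda>j. z ^ (card (UNIV :: 'a set) ^ j))"
  have F: "map_poly to_ac f \<noteq> 0"
    using f(1) by auto
  have "insert w S \<subseteq> {x. poly (map_poly to_ac f) x = 0}"
    using f(2) w by (auto simp: S_def poly_map_poly_to_ac_power_card_power[OF Q] finite_UNIV_card_ge_0)
  then have "card (insert w S) \<le> card {x. poly (map_poly to_ac f) x = 0}"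
    by (rule card_mono[OF poly_roots_finite[OF F]])
  also have "\<dots> \<le> degree f"
    using card_poly_roots_bound[OF F] by simp
  finally have "card (insert w S) \<le> degree f" .
  moreover have "w \<notin> S"
    using w_notin by (auto simp: S_def)
  ultimately show False
    using irreducible_degree_le_card_frobenius_orbit[OF Q f] by (simp add: S_def)
qed

lemma root_of_dvd_monom_minus_one:
  fixes f :: "'a::field poly"
  assumes "f dvd monom 1 l - 1" "poly (map_poly to_ac f) z = 0"
  shows "z ^ l = 1"
proof -
  obtain h where "monom 1 l - 1 = f * h"
    using assms(1) by blast
  then have "poly (map_poly to_ac (monom 1 l - 1)) z = 0"
    using assms(2) by simp
  then show ?thesis
    by (simp add: map_poly_monom poly_monom)
qed

lemma coeff_0_neq_0_if_dvd_monom_minus_one: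
  fixes f :: "'a::field poly"
  assumes "f dvd monom 1 l - 1" "l > 0"
  shows "coeff f 0 \<noteq> 0"
proof
  assume "coeff f 0 = 0"
  moreover obtain h where "monom 1 l - 1 = f * h"
    using assms(1) by blast
  then have "poly (monom 1 l - 1) 0 = poly f 0 * poly h (0 :: 'a)"
    by simp
  ultimately show False
    using assms(2) by (simp add: poly_monom poly_0_coeff_0)
qed

lemma power_eq_1_imp_prime_dvd:
  fixes z :: "'b::monoid_mult"
  assumes "prime l" "z ^ l = 1" "z \<noteq> 1" "z ^ m = 1"
  shows "l dvd m"
proof (rule ccontr)
  assume "\<not> l dvd m"
  then have "m \<noteq> 0" "coprime m l"
    using assms(1) by (auto simp: prime_imp_coprime coprime_commute intro: Nat.gr0I)
  then obtain x y where xy: "m * x = l * y + 1"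
    using bezout_nat[of m l] by auto
  have "z ^ (m * x) = 1"
    using assms(4) by (simp add: power_mult)
  moreover have "z ^ (l * y + 1) = z"
    using assms(2) by (simp add: power_mult)
  ultimately show False
    using xy assms(3) by simp
qed

lemma degree_dagger:
  fixes f :: "'a::field poly"
  assumes "coeff f 0 \<noteq> 0"
  shows "degree (dagger q f) = degree f"
  using assms by (simp add: dagger_def poly_conj_def recip_star_def conj_q_def degree_map_poly)

lemma lead_coeff_dagger:
  fixes f :: "'a::field poly"
  assumes "coeff f 0 \<noteq> 0" "q > 0"
  shows "lead_coeff (dagger q f) = 1"
proof -
  have "lead_coeff (recip_star f) = 1"
    using assms by (simp add: recip_star_def coeff_reflect_poly)
  then show ?thesis
    using assms
    by (simp add: dagger_def poly_conj_def conj_q_def lead_coeff_map_poly_nz degree_dagger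
        flip: recip_star_def)
qed

context
  fixes q k :: nat
  assumes card_eq: "card (UNIV :: 'a::{finite,field} set) = q ^ 2"
    and q_eq: "q = CHAR('a) ^ k"
begin

lemma q_pos: "q > 0"
  using q_eq prime_CHAR_finite_field[where 'a = 'a] prime_gt_0_nat by simp

lemma card_eq_CHAR_power: "card (UNIV :: 'a set) = CHAR('a) ^ (2 * k)"
  by (simp add: card_eq q_eq power_mult mult.commute)

lemma poly_dagger_eq_0_iff:
  fixes f :: "'a poly"
  assumes "coeff f 0 \<noteq> 0" "z \<noteq> 0"
  shows "poly (map_poly to_ac (dagger q f)) z = 0 \<longleftrightarrow> poly (map_poly to_ac f) (inverse (z ^ q)) = 0"
proof -
  have conj_conj: "map_poly (\<lambda>a. a ^ q) (poly_conj q g) = g" for g :: "'a poly"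
    using finite_field_power_card_eq_self[where 'a = 'a] q_pos
    by (simp add: poly_conj_def conj_q_def map_poly_map_poly o_def card_eq power2_eq_square
        flip: power_mult)
  have "poly (map_poly to_ac (dagger q f)) z ^ q = poly (map_poly to_ac (recip_star f)) (z ^ q)"
    using poly_map_poly_to_ac_frobenius[OF prime_CHAR_finite_field q_eq]
    by (simp add: dagger_def conj_conj)
  also have "\<dots> = to_ac (inverse (coeff f 0)) * ((z ^ q) ^ degree f * poly (map_poly to_ac f) (inverse (z ^ q)))"
    using assms(2) by (simp add: recip_star_def map_poly_smult map_poly_to_ac_reflect_poly poly_reflect_poly_nz)
  finally have "poly (map_poly to_ac (dagger q f)) z ^ q = 0 \<longleftrightarrow> poly (map_poly to_ac f) (inverse (z ^ q)) = 0"
    using assms by simp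
  then show ?thesis
    using q_pos by simp
qed

lemma SCRIM_iff_root_power_eq_1:
  fixes f :: "'a poly"
  assumes monic: "lead_coeff f = 1" and irr: "irreducible f" and c0: "coeff f 0 \<noteq> 0"
    and root: "poly (map_poly to_ac f) z = 0"
  shows "SCRIM q f \<longleftrightarrow> (\<exists>j. z ^ ((q ^ 2) ^ j + q) = 1)"
proof -
  have "z \<noteq> 0"
    using root c0 by (auto simp: poly_0_coeff_0 coeff_map_poly)
  have "f = dagger q f \<longleftrightarrow> poly (map_poly to_ac f) (inverse (z ^ q)) = 0"
  proof
    assume "f = dagger q f"
    then show "poly (map_poly to_ac f) (inverse (z ^ q)) = 0"
      using root poly_dagger_eq_0_iff[OF c0 \<open>z \<noteq> 0\<close>] by simp
  next
    assume "poly (map_poly to_ac f) (inverse (z ^ q)) = 0"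
    then have "f dvd dagger q f"
      using irr root poly_dagger_eq_0_iff[OF c0 \<open>z \<noteq> 0\<close>] irreducible_dvd_of_common_root by blast
    then show "f = dagger q f"
      using monic_dvd_imp_eq[OF monic lead_coeff_dagger[OF c0 q_pos]] degree_dagger[OF c0] by simp
  qed
  also have "\<dots> \<longleftrightarrow> (\<exists>j. inverse (z ^ q) = z ^ ((q ^ 2) ^ j))"
    using irreducible_roots_in_frobenius_orbit[OF card_eq_CHAR_power irr root]
      poly_map_poly_to_ac_power_card_power[OF card_eq_CHAR_power, of f z] root
    by (auto simp: card_eq q_pos)
  also have "\<dots> \<longleftrightarrow> (\<exists>j. z ^ ((q ^ 2) ^ j + q) = 1)"
    using \<open>z \<noteq> 0\<close> by (simp add: power_add field_simps)
  finally show ?thesis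
    using monic irr c0 by (simp add: SCRIM_def)
qed

lemma SCRIM_if_dvd_monom_minus_one:
  fixes f :: "'a poly"
  assumes "l > 0" "l dvd (q ^ 2) ^ j + q"
    and "lead_coeff f = 1" "irreducible f" "f dvd monom 1 l - 1"
  shows "SCRIM q f"
proof -
  obtain z where root: "poly (map_poly to_ac f) z = 0"
    using irreducible_has_root_in_alg_closure[OF assms(4)] .
  have "z ^ ((q ^ 2) ^ j + q) = 1"
    using root_of_dvd_monom_minus_one[OF assms(5) root] assms(2) by (auto simp: power_mult)
  then show ?thesis
    using SCRIM_iff_root_power_eq_1[OF assms(3,4) coeff_0_neq_0_if_dvd_monom_minus_one[OF assms(5,1)] root]
    by blast
qed

lemma SCRIM_dvd_monom_minus_one_eq_linear:
  fixes f :: "'a poly"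
  assumes l: "prime l" "\<nexists>j. l dvd (q ^ 2) ^ j + q"
    and f: "SCRIM q f" "f dvd monom 1 l - 1"
  shows "f = [:-1, 1:]"
proof -
  have monic: "lead_coeff f = 1" and irr: "irreducible f"
    using f(1) by (simp_all add: SCRIM_def)
  obtain z where root: "poly (map_poly to_ac f) z = 0"
    using irreducible_has_root_in_alg_closure[OF irr] .
  obtain j where "z ^ ((q ^ 2) ^ j + q) = 1"
    using SCRIM_iff_root_power_eq_1[OF monic irr _ root] f(1) by (auto simp: SCRIM_def)
  then have "z = 1"
    using power_eq_1_imp_prime_dvd[OF l(1) root_of_dvd_monom_minus_one[OF f(2) root]] l(2) by blast
  then have "f dvd [:-1, 1:]"
    using irreducible_dvd_of_common_root[OF irr root, of "[:-1, 1:]"] by (simp add: map_poly_pCons)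
  then show ?thesis
    using monic_dvd_imp_eq[OF monic] irreducible_imp_degree_pos[OF irr] by simp
qed

end

theorem proposition2p3:
  fixes q l :: nat
  assumes card: "card (UNIV :: 'a::{finite,field} set) = q ^ 2"
    and qpp: "\<exists>p k. prime p \<and> k > 0 \<and> q = p ^ k"
    and lprime: "prime l" and lodd: "odd l" and cop: "coprime l q"
  shows "(\<forall>f :: 'a poly. lead_coeff f = 1 \<and> irreducible f \<and> f dvd (monom 1 l - 1)
            \<longrightarrow> SCRIM q f)
       \<or> (\<forall>f :: 'a poly. SCRIM q f \<and> f dvd (monom 1 l - 1) \<longrightarrow> f = [:-1, 1:])"
proof -
  obtain p k where p: "prime p" "k > 0" "q = p ^ k"
    using qpp by blast
  then have "CHAR('a) = p"
    using CHAR_eq_if_card_eq_prime_power[of p "2 * k"] card by (simp add: power_mult mult.commute)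
  then have q_eq: "q = CHAR('a) ^ k"
    using p by simp
  show ?thesis
  proof (cases "\<exists>j. l dvd (q ^ 2) ^ j + q")
    case True
    then obtain j where "l dvd (q ^ 2) ^ j + q"
      by blast
    then show ?thesis
      using SCRIM_if_dvd_monom_minus_one[OF card q_eq] prime_gt_0_nat[OF lprime] by blast
  next
    case False
    then show ?thesis
      using SCRIM_dvd_monom_minus_one_eq_linear[OF card q_eq lprime] by blast
  qed
qed

end
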